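(* Let $n\ge1$, $G=\mathrm{SL}(n+1,\mathbb{R})$, and for $t>0$ let $a(t)=\mathrm{diag}(t^n,t^{-1},\dots,t^{-1})$. Let $\Omega\subset\mathbb{R}$ be open, $\Phi:\Omega\to G$ a $C^1$ map, and let $\phi:\Omega\to\mathbb{R}^{n+1}$ be the first row of $\Phi$. Let $s\in\Omega$ be such that $\phi$ is $(n+1)$-times differentiable and nondegenerate at $s$. Then there exist a nilpotent matrix $B_s\in M(n+1,\mathbb{R})$ of rank $n$ and elements $\xi_s(1),\xi_s(-1)\in G$ such that for every $t\neq0$ with $s+t^{-1}\in\Omega$, $$a(|t|)\Phi(s+t^{-1})=\bigl(I+t\,o(t^{-1})\bigr)\,\xi_s(\sigma)\,(I-tB_s)^{-1},\qquad \sigma=t/|t|,$$ where $o(t^{-1})\in M(n+1,\mathbb{R})$ is a matrix-valued function of $t$ with $t\,o(t^{-1})\to0$ as $|t|\to\infty$.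
   Context: For $d=1$, nondegeneracy of $\phi$ at $s$ means (in the sense of the paper's definition): $\phi'(s)\ne0$, and with $\mathcal{T}=\mathbb{R}\phi'(s)$ there is a subspace $\mathcal{L}\ni\phi(s)$ with $\mathcal{T}\oplus\mathcal{L}=\mathbb{R}^{n+1}$, a vector $0\ne v\in\mathcal{T}$, a neighborhood $\Omega_1$ of $s$ and $r_0>0$ such that the curve $\rho_v(r)=\phi(\Omega_1)\cap(rv+\mathcal{L})$, $|r|<r_0$, is nondegenerate at $0$, where a curve $\zeta$ in $\mathbb{R}^k$ is nondegenerate at a point if its derivatives of orders $0,\dots,k-1$ exist there and span $\mathbb{R}^k$. Vectors in $\mathbb{R}^{n+1}$ are row vectors and matrices act on them from the right. *)

theory Defs
  imports "HOL-Analysis.Analysis"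
begin

text \<open>Index type 'n of cardinality n+1; the "first" index is the least element.\<close>

definition first_idx :: "'n::{finite,wellorder}" where
  "first_idx = (LEAST i. True)"

definition a_diag :: "real \<Rightarrow> (real^('n::{finite,wellorder}))^('n::{finite,wellorder})" where
  "a_diag t = (\<chi> i j. if i = j then (if i = first_idx then t ^ (CARD('n) - 1) else inverse t) else 0)"

text \<open>f is m-times differentiable at x, with D k the k-th derivative (valid at x for k \<le> m):
  the derivatives of order < m exist on a neighbourhood of x, the m-th exists at x.\<close>
definition higher_diff_at ::
  "nat \<Rightarrow> (real \<Rightarrow> 'a::real_normed_vector) \<Rightarrow> real \<Rightarrow> (nat \<Rightarrow> real \<Rightarrow> 'a) \<Rightarrow> bool" where
  "higher_diff_at m f x D \<longleftrightarrow> D 0 = f \<and>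
     (\<exists>U. open U \<and> x \<in> U \<and>
        (\<forall>k. Suc k < m \<longrightarrow> (\<forall>y\<in>U. (D k has_vector_derivative D (Suc k) y) (at y)))) \<and>
     (0 < m \<longrightarrow> (D (m - 1) has_vector_derivative D m x) (at x))"

definition curve_nondeg_at :: "(real \<Rightarrow> real^'n::finite) \<Rightarrow> real \<Rightarrow> bool" where
  "curve_nondeg_at \<zeta> x \<longleftrightarrow>
     (\<exists>D. higher_diff_at (CARD('n) - 1) \<zeta> x D \<and>
          span {D k x | k. k \<le> CARD('n) - 1} = UNIV)"

definition nondeg_at :: "(real \<Rightarrow> real^'n::finite) \<Rightarrow> real set \<Rightarrow> real \<Rightarrow> bool" where
  "nondeg_at \<phi> \<Omega> s \<longleftrightarrow>
     \<phi> differentiable (at s) \<and> vector_derivative \<phi> (at s) \<noteq> 0 \<and>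
     (let T = span {vector_derivative \<phi> (at s)} in
      \<exists>L v \<Omega>1 r0 \<rho>. subspace L \<and> \<phi> s \<in> L \<and> T \<inter> L = {0} \<and>
        {x + y | x y. x \<in> T \<and> y \<in> L} = UNIV \<and>
        v \<in> T \<and> v \<noteq> 0 \<and> open \<Omega>1 \<and> s \<in> \<Omega>1 \<and> \<Omega>1 \<subseteq> \<Omega> \<and> 0 < r0 \<and>
        (\<forall>r. \<bar>r\<bar> < r0 \<longrightarrow> \<phi> ` \<Omega>1 \<inter> (\<lambda>l. r *\<^sub>R v + l) ` L = {\<rho> r}) \<and>
        curve_nondeg_at \<rho> 0)"

definition nilpotent_mat :: "real^'n^'n \<Rightarrow> bool" where
  "nilpotent_mat B \<longleftrightarrow> (\<exists>k. (((**) B) ^^ k) (mat 1) = 0)"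

end

(*
  Let v k = phi^(k)(s) / k!, so that phi (s + h) = (SUM k <= n+1. h^k v k) + o(h^(n+1)).
  Nondegeneracy makes v 0, ..., v n a basis: a vector u orthogonal to all of them makes
  u . phi (s + h) = o(h^n), and since the slice curve rho is a reparametrization of phi with
  Lipschitz parameter change, also u . rho r = o(r^n), forcing u to be orthogonal to all
  derivatives of rho at 0, hence u = 0.  Let B be the shift v 0 |-> 0, v (k+1) |-> v k:
  it is nilpotent of rank n and det (I - t B) = 1.  In the first row of
  a(|t|) Phi(s + 1/t) (I - t B), i.e. |t|^n (phi - t phi B) at s + 1/t, the shift cancels the
  Taylor polynomial up to order n and leaves sgn(t)^n (v n - v (n+1) B) + o(1); every other
  row is |t|^(-1) Phi_i(s + 1/t) (I - t B) -> -sgn(t) Phi_i(s) B.  So the product tends to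
  limits xi(+1), xi(-1) as t -> +oo, -oo, which have determinant 1, and
  I + t E(t) := a(|t|) Phi(s + 1/t) (I - t B) xi(sgn t)^(-1) tends to I.
*)

theory Submission
  imports Defs
begin

section \<open>Little-o at zero and Taylor's formula\<close>

(* The bound is imposed on the full neighbourhood nhds 0, not on at 0, so it forces R 0 = 0. *)
definition little_o_at_0 :: "nat \<Rightarrow> (real \<Rightarrow> 'a::real_normed_vector) \<Rightarrow> bool" where
  "little_o_at_0 m R \<longleftrightarrow> (\<forall>e>0. eventually (\<lambda>h. norm (R h) \<le> e * \<bar>h\<bar> ^ m) (nhds 0))"

lemma little_o_at_0D:
  assumes "little_o_at_0 m R" "e > 0"
  obtains d where "d > 0" "\<And>h. \<bar>h\<bar> < d \<Longrightarrow> norm (R h) \<le> e * \<bar>h\<bar> ^ m"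
  using assms unfolding little_o_at_0_def eventually_nhds_metric dist_real_def by auto

lemma little_o_at_0I:
  assumes "\<And>e. e > 0 \<Longrightarrow> \<exists>d>0. \<forall>h. \<bar>h\<bar> < d \<longrightarrow> norm (R h) \<le> e * \<bar>h\<bar> ^ m"
  shows "little_o_at_0 m R"
  using assms unfolding little_o_at_0_def eventually_nhds_metric dist_real_def by auto

lemma little_o_at_0_imp_eq_0:
  assumes "little_o_at_0 m R"
  shows "R 0 = 0"
proof -
  have "norm (R 0) \<le> 0 + e" if "e > 0" for e
  proof -
    have "eventually (\<lambda>h. norm (R h) \<le> e * \<bar>h\<bar> ^ m) (nhds 0)"
      using assms \<open>e > 0\<close> unfolding little_o_at_0_def by blast
    then have "norm (R 0) \<le> e * \<bar>0\<bar> ^ m" by (rule eventually_nhds_x_imp_x)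
    also have "\<dots> \<le> 0 + e" using \<open>e > 0\<close> by (simp add: power_0_left)
    finally show ?thesis .
  qed
  then have "norm (R 0) \<le> 0" by (rule field_le_epsilon)
  then show ?thesis by simp
qed

lemma little_o_at_0_diff:
  assumes "little_o_at_0 m R" "little_o_at_0 m S"
  shows "little_o_at_0 m (\<lambda>h. R h - S h)"
  unfolding little_o_at_0_def
proof (intro allI impI)
  fix e :: real assume "e > 0"
  then have "e / 2 > 0" by simp
  then have "eventually (\<lambda>h. norm (R h) \<le> e / 2 * \<bar>h\<bar> ^ m) (nhds 0)"
    and "eventually (\<lambda>h. norm (S h) \<le> e / 2 * \<bar>h\<bar> ^ m) (nhds 0)"
    using assms unfolding little_o_at_0_def by blast+
  then show "eventually (\<lambda>h. norm (R h - S h) \<le> e * \<bar>h\<bar> ^ m) (nhds 0)"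
  proof eventually_elim
    case (elim h)
    then show ?case using norm_triangle_ineq4[of "R h" "S h"] by linarith
  qed
qed

lemma (in bounded_linear) little_o_at_0:
  assumes "little_o_at_0 m R"
  shows "little_o_at_0 m (\<lambda>h. f (R h))"
  unfolding little_o_at_0_def
proof (intro allI impI)
  fix e :: real assume "e > 0"
  obtain K where K: "K > 0" "\<And>x. norm (f x) \<le> norm x * K" using pos_bounded by blast
  have "e / K > 0" using \<open>e > 0\<close> \<open>K > 0\<close> by simp
  then have "eventually (\<lambda>h. norm (R h) \<le> e / K * \<bar>h\<bar> ^ m) (nhds 0)"
    using assms unfolding little_o_at_0_def by blast
  then show "eventually (\<lambda>h. norm (f (R h)) \<le> e * \<bar>h\<bar> ^ m) (nhds 0)"
  proof eventually_elim
    case (elim h)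
    then have "norm (R h) * K \<le> e * \<bar>h\<bar> ^ m" using \<open>K > 0\<close> by (simp add: field_simps)
    then show ?case using K(2)[of "R h"] by linarith
  qed
qed

lemma little_o_at_0_reparametrize:
  assumes R: "little_o_at_0 m R" and "c > 0"
    and dom: "eventually (\<lambda>r. \<exists>y. \<bar>y\<bar> \<le> \<bar>r\<bar> / c \<and> norm (S r) \<le> norm (R y)) (nhds 0)"
  shows "little_o_at_0 m S"
proof (rule little_o_at_0I)
  fix e :: real assume "e > 0"
  then obtain d where "d > 0" and d: "\<And>y. \<bar>y\<bar> < d \<Longrightarrow> norm (R y) \<le> e * c ^ m * \<bar>y\<bar> ^ m"
    using little_o_at_0D[OF R, of "e * c ^ m"] \<open>c > 0\<close> by auto
  obtain d' where "d' > 0"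
    and d': "\<And>r. \<bar>r\<bar> < d' \<Longrightarrow> \<exists>y. \<bar>y\<bar> \<le> \<bar>r\<bar> / c \<and> norm (S r) \<le> norm (R y)"
    using dom unfolding eventually_nhds_metric dist_real_def by auto
  show "\<exists>d>0. \<forall>r. \<bar>r\<bar> < d \<longrightarrow> norm (S r) \<le> e * \<bar>r\<bar> ^ m"
  proof (intro exI[of _ "min d' (c * d)"] conjI allI impI)
    fix r :: real assume r: "\<bar>r\<bar> < min d' (c * d)"
    then obtain y where y: "\<bar>y\<bar> \<le> \<bar>r\<bar> / c" "norm (S r) \<le> norm (R y)" using d' by auto
    have "c * \<bar>y\<bar> \<le> \<bar>r\<bar>" using y(1) \<open>c > 0\<close> by (simp add: field_simps)
    then have "c * \<bar>y\<bar> < c * d" using r by linarith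
    then have "\<bar>y\<bar> < d" using \<open>c > 0\<close> by simp
    have "norm (S r) \<le> e * c ^ m * \<bar>y\<bar> ^ m" using y(2) d[OF \<open>\<bar>y\<bar> < d\<close>] by linarith
    also have "\<dots> \<le> e * c ^ m * (\<bar>r\<bar> / c) ^ m"
      using y(1) \<open>e > 0\<close> \<open>c > 0\<close> by (intro mult_left_mono power_mono) auto
    also have "\<dots> = e * \<bar>r\<bar> ^ m" using \<open>c > 0\<close> by (simp add: power_divide)
    finally show "norm (S r) \<le> e * \<bar>r\<bar> ^ m" .
  qed (use \<open>d > 0\<close> \<open>d' > 0\<close> \<open>c > 0\<close> in simp)
qed

lemma little_o_at_0_antiderivative:
  fixes g :: "real \<Rightarrow> 'a::real_normed_vector"
  assumes "g 0 = 0" and "d0 > 0"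
    and deriv: "\<And>y. \<bar>y\<bar> < d0 \<Longrightarrow> (g has_vector_derivative g' y) (at y)"
    and "little_o_at_0 m g'"
  shows "little_o_at_0 (Suc m) g"
proof (rule little_o_at_0I)
  fix e :: real assume "e > 0"
  obtain d where "d > 0" and d: "\<And>y. \<bar>y\<bar> < d \<Longrightarrow> norm (g' y) \<le> e * \<bar>y\<bar> ^ m"
    using little_o_at_0D[OF \<open>little_o_at_0 m g'\<close> \<open>e > 0\<close>] by blast
  have "g' 0 = 0" using \<open>little_o_at_0 m g'\<close> by (rule little_o_at_0_imp_eq_0)
  show "\<exists>d>0. \<forall>h. \<bar>h\<bar> < d \<longrightarrow> norm (g h) \<le> e * \<bar>h\<bar> ^ Suc m"
  proof (intro exI[of _ "min d d0"] conjI allI impI)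
    fix h :: real assume h: "\<bar>h\<bar> < min d d0"
    have seg: "\<bar>y\<bar> \<le> \<bar>h\<bar>" if "y \<in> closed_segment 0 h" for y
      using that by (auto simp: closed_segment_def abs_mult intro!: mult_left_le_one_le)
    have "norm (g h - g 0 - (h - 0) *\<^sub>R g' 0) \<le> norm (h - 0) * (e * \<bar>h\<bar> ^ m)"
    proof (rule vector_differentiable_bound_linearization[where S = "closed_segment 0 h"])
      fix y assume y: "y \<in> closed_segment 0 h"
      then have "\<bar>y\<bar> < d" "\<bar>y\<bar> < d0" using seg h by fastforce+
      then show "(g has_vector_derivative g' y) (at y within closed_segment 0 h)"
        using deriv has_vector_derivative_at_within by blast
      have "norm (g' y) \<le> e * \<bar>y\<bar> ^ m" using d \<open>\<bar>y\<bar> < d\<close> by blast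
      also have "\<dots> \<le> e * \<bar>h\<bar> ^ m"
        using seg[OF y] \<open>e > 0\<close> by (simp add: power_mono)
      finally show "norm (g' y - g' 0) \<le> e * \<bar>h\<bar> ^ m" using \<open>g' 0 = 0\<close> by simp
    qed simp_all
    then show "norm (g h) \<le> e * \<bar>h\<bar> ^ Suc m"
      using \<open>g 0 = 0\<close> \<open>g' 0 = 0\<close> by (simp add: mult.assoc mult.left_commute)
  qed (use \<open>d > 0\<close> \<open>d0 > 0\<close> in simp)
qed

lemma little_o_at_0_at_infinity:
  assumes "little_o_at_0 m R"
  shows "((\<lambda>t. t ^ m *\<^sub>R R (inverse t)) \<longlongrightarrow> 0) at_infinity"
proof (rule tendstoI)
  fix e :: real assume "e > 0"
  then have "e / 2 > 0" by simp
  then have "eventually (\<lambda>h. norm (R h) \<le> e / 2 * \<bar>h\<bar> ^ m) (nhds 0)"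
    using assms unfolding little_o_at_0_def by blast
  then have "eventually (\<lambda>t. norm (R (inverse t)) \<le> e / 2 * \<bar>inverse t\<bar> ^ m) at_infinity"
    using eventually_compose_filterlim tendsto_inverse_0 by blast
  with eventually_not_equal_at_infinity[of 0]
  show "eventually (\<lambda>t. dist (t ^ m *\<^sub>R R (inverse t)) 0 < e) at_infinity"
  proof eventually_elim
    case (elim t)
    have "norm (t ^ m *\<^sub>R R (inverse t)) = \<bar>t\<bar> ^ m * norm (R (inverse t))"
      by (simp add: power_abs)
    also have "\<dots> \<le> \<bar>t\<bar> ^ m * (e / 2 * \<bar>inverse t\<bar> ^ m)"
      using elim(2) by (rule mult_left_mono) simp
    also have "\<dots> = e / 2" using elim(1) by (simp add: power_mult_distrib[symmetric] abs_inverse)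
    finally show ?case using \<open>e > 0\<close> by simp
  qed
qed

lemma has_vector_derivative_little_o_at_0:
  assumes "(f has_vector_derivative f') (at x)"
  shows "little_o_at_0 1 (\<lambda>h. f (x + h) - f x - h *\<^sub>R f')"
proof (rule little_o_at_0I)
  fix e :: real assume "e > 0"
  with assms obtain d where "d > 0"
    and d: "\<forall>y. norm (y - x) < d \<longrightarrow> norm (f y - f x - (y - x) *\<^sub>R f') \<le> e * norm (y - x)"
    unfolding has_vector_derivative_def has_derivative_at_alt by blast
  have "norm (f (x + h) - f x - h *\<^sub>R f') \<le> e * \<bar>h\<bar> ^ 1" if "\<bar>h\<bar> < d" for h
    using d[rule_format, of "x + h"] that by simp
  then show "\<exists>d>0. \<forall>h. \<bar>h\<bar> < d \<longrightarrow> norm (f (x + h) - f x - h *\<^sub>R f') \<le> e * \<bar>h\<bar> ^ 1"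
    using \<open>d > 0\<close> by blast
qed

lemma has_vector_derivative_taylor_poly:
  fixes c :: "nat \<Rightarrow> 'a::real_normed_vector"
  shows "((\<lambda>y. \<Sum>k\<le>Suc m. (y ^ k / fact k) *\<^sub>R c k) has_vector_derivative
          (\<Sum>k\<le>m. (y ^ k / fact k) *\<^sub>R c (Suc k))) (at y)"
proof -
  have d: "((\<lambda>y. y ^ Suc k / fact (Suc k)) has_real_derivative y ^ k / fact k) (at y)" for k
    by (rule derivative_eq_intros refl | simp add: fact_Suc field_simps del: of_nat_Suc)+
  have "((\<lambda>y. c 0 + (\<Sum>k\<le>m. (y ^ Suc k / fact (Suc k)) *\<^sub>R c (Suc k))) has_vector_derivative
          (\<Sum>k\<le>m. (y ^ k / fact k) *\<^sub>R c (Suc k))) (at y)"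
    by (rule derivative_eq_intros d refl | simp)+
  then show ?thesis
    by (simp only: sum.atMost_Suc_shift) simp
qed

lemma taylor_poly_at_0: "(\<Sum>k\<le>m. ((0::real) ^ k / fact k) *\<^sub>R c k) = (c 0 :: 'a::real_vector)"
  by (induction m) auto

lemma higher_diff_at_Suc_imp:
  assumes "higher_diff_at (Suc m) f x D"
  shows "higher_diff_at m f x D"
proof -
  obtain U where "D 0 = f" "open U" "x \<in> U"
    and U: "\<forall>k. Suc k < Suc m \<longrightarrow> (\<forall>y\<in>U. (D k has_vector_derivative D (Suc k) y) (at y))"
    using assms unfolding higher_diff_at_def by blast
  moreover have "(D (m - 1) has_vector_derivative D m x) (at x)" if "0 < m"
    using U[rule_format, of "m - 1" x] \<open>x \<in> U\<close> that by simp
  ultimately show ?thesis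
    unfolding higher_diff_at_def by (auto intro!: exI[of _ U])
qed

lemma higher_diff_at_derivative:
  assumes "higher_diff_at (Suc m) f x D" "0 < m"
  shows "higher_diff_at m (D 1) x (\<lambda>k. D (Suc k))"
proof -
  obtain U where "open U" "x \<in> U"
    and "\<forall>k. Suc k < Suc m \<longrightarrow> (\<forall>y\<in>U. (D k has_vector_derivative D (Suc k) y) (at y))"
    and "(D m has_vector_derivative D (Suc m) x) (at x)"
    using assms(1) unfolding higher_diff_at_def by auto
  then show ?thesis
    unfolding higher_diff_at_def using assms(2) by (auto intro!: exI[of _ U])
qed

lemma higher_diff_at_taylor:
  assumes "higher_diff_at m f x D" "0 < m"
  shows "little_o_at_0 m (\<lambda>h. f (x + h) - (\<Sum>k\<le>m. (h ^ k / fact k) *\<^sub>R D k x))"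
  using assms
proof (induction m arbitrary: f D)
  case 0
  then show ?case by simp
next
  case (Suc m)
  from Suc.prems(1) obtain U where "open U" "x \<in> U" and "D 0 = f"
    and U: "\<And>k y. Suc k < Suc m \<Longrightarrow> y \<in> U \<Longrightarrow> (D k has_vector_derivative D (Suc k) y) (at y)"
    and last: "(D m has_vector_derivative D (Suc m) x) (at x)"
    unfolding higher_diff_at_def by auto
  show ?case
  proof (cases "m = 0")
    case True
    then show ?thesis
      using has_vector_derivative_little_o_at_0[OF last] \<open>D 0 = f\<close> by (simp add: diff_diff_add)
  next
    case False
    define g where "g h = f (x + h) - (\<Sum>k\<le>Suc m. (h ^ k / fact k) *\<^sub>R D k x)" for h
    define g' where "g' h = D 1 (x + h) - (\<Sum>k\<le>m. (h ^ k / fact k) *\<^sub>R D (Suc k) x)" for h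
    obtain d0 where "d0 > 0" and "ball x d0 \<subseteq> U" using \<open>open U\<close> \<open>x \<in> U\<close> open_contains_ball by blast
    have "(g has_vector_derivative g' y) (at y)" if "\<bar>y\<bar> < d0" for y
    proof -
      have "x + y \<in> U" using that \<open>ball x d0 \<subseteq> U\<close> by (auto simp: dist_real_def)
      then have "(f has_vector_derivative D 1 (x + y)) (at (x + y))"
        using U[of 0] False \<open>D 0 = f\<close> by auto
      moreover have "((\<lambda>y. x + y) has_vector_derivative 1) (at y)"
        by (rule derivative_eq_intros refl)+ simp
      ultimately have "((\<lambda>y. f (x + y)) has_vector_derivative D 1 (x + y)) (at y)"
        using vector_diff_chain_at[of "\<lambda>y. x + y" 1 y f] by (simp add: o_def)
      then show ?thesis
        unfolding g_def[abs_def] g'_def by (rule has_vector_derivative_diff[OF _ has_vector_derivative_taylor_poly])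
    qed
    moreover have "little_o_at_0 m g'"
      unfolding g'_def using Suc.IH[OF higher_diff_at_derivative[OF Suc.prems(1)]] False by simp
    moreover have "g 0 = 0" using \<open>D 0 = f\<close> by (simp add: g_def taylor_poly_at_0)
    ultimately have "little_o_at_0 (Suc m) g"
      using little_o_at_0_antiderivative[OF _ \<open>d0 > 0\<close>] by blast
    then show ?thesis by (simp only: g_def[abs_def])
  qed
qed

lemma polynomial_small_at_0_const_coeff:
  fixes c :: "nat \<Rightarrow> real"
  assumes small: "\<forall>e>0. eventually (\<lambda>r. \<bar>\<Sum>k\<le>n. c k * r ^ k\<bar> \<le> e * \<bar>r\<bar> ^ n) (at 0)"
  shows "c 0 = 0"
proof -
  have "\<bar>c 0\<bar> \<le> 0 + e" if "e > 0" for e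
  proof -
    have "\<bar>\<Sum>k\<le>n. c k * 0 ^ k\<bar> \<le> e * \<bar>0\<bar> ^ n"
      by (rule tendsto_le[OF at_neq_bot _ _ small[rule_format, OF \<open>e > 0\<close>]])
        (intro tendsto_intros)+
    also have "\<dots> \<le> e" using \<open>e > 0\<close> by (simp add: power_0_left)
    moreover have "(\<Sum>k\<le>n. c k * 0 ^ k) = c 0" by (induction n) auto
    ultimately show ?thesis by simp
  qed
  then show ?thesis using field_le_epsilon[of "\<bar>c 0\<bar>" 0] by simp
qed

(* Stated for the punctured filter: the induction divides by r and loses the bound at r = 0. *)
lemma polynomial_small_at_0_coeffs_zero:
  fixes c :: "nat \<Rightarrow> real"
  assumes "\<forall>e>0. eventually (\<lambda>r. \<bar>\<Sum>k\<le>n. c k * r ^ k\<bar> \<le> e * \<bar>r\<bar> ^ n) (at 0)" "k \<le> n"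
  shows "c k = 0"
  using assms
proof (induction n arbitrary: c k)
  case 0
  then show ?case using polynomial_small_at_0_const_coeff by blast
next
  case (Suc n)
  have "c 0 = 0" using polynomial_small_at_0_const_coeff Suc.prems(1) by blast
  show ?case
  proof (cases k)
    case 0
    then show ?thesis using \<open>c 0 = 0\<close> by simp
  next
    case (Suc j)
    have "eventually (\<lambda>r. \<bar>\<Sum>k\<le>n. c (Suc k) * r ^ k\<bar> \<le> e * \<bar>r\<bar> ^ n) (at 0)" if "e > 0" for e
      using Suc.prems(1)[rule_format, OF \<open>e > 0\<close>] eventually_neq_at_within[of 0 0 UNIV]
    proof eventually_elim
      case (elim r)
      have "(\<Sum>k\<le>Suc n. c k * r ^ k) = r * (\<Sum>k\<le>n. c (Suc k) * r ^ k)"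
        using \<open>c 0 = 0\<close> by (simp add: sum.atMost_Suc_shift sum_distrib_left mult_ac del: sum.atMost_Suc)
      then have "\<bar>r\<bar> * \<bar>\<Sum>k\<le>n. c (Suc k) * r ^ k\<bar> \<le> \<bar>r\<bar> * (e * \<bar>r\<bar> ^ n)"
        using elim(1) by (simp add: abs_mult mult_ac)
      then show ?case using elim(2) by simp
    qed
    then show ?thesis
      using Suc.IH[of "\<lambda>k. c (Suc k)" j] Suc.prems(2) \<open>k = Suc j\<close> by simp
  qed
qed

lemma polynomial_little_o_at_0_coeffs_zero:
  fixes c :: "nat \<Rightarrow> real"
  assumes "little_o_at_0 n (\<lambda>r. \<Sum>k\<le>n. c k * r ^ k)" "k \<le> n"
  shows "c k = 0"
proof (rule polynomial_small_at_0_coeffs_zero[OF _ assms(2)])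
  show "\<forall>e>0. eventually (\<lambda>r. \<bar>\<Sum>k\<le>n. c k * r ^ k\<bar> \<le> e * \<bar>r\<bar> ^ n) (at 0)"
    using assms(1) unfolding little_o_at_0_def eventually_at_filter by (auto elim: eventually_mono)
qed

lemma higher_diff_at_inner_little_o_iff:
  assumes "higher_diff_at m f x D" "0 < m"
  shows "little_o_at_0 m (\<lambda>h. u \<bullet> f (x + h)) \<longleftrightarrow> (\<forall>k\<le>m. u \<bullet> D k x = 0)"
proof -
  have "little_o_at_0 m (\<lambda>h. u \<bullet> (f (x + h) - (\<Sum>k\<le>m. (h ^ k / fact k) *\<^sub>R D k x)))"
    by (rule bounded_linear.little_o_at_0[OF bounded_linear_inner_right higher_diff_at_taylor[OF assms]])
  then have taylor: "little_o_at_0 m (\<lambda>h. u \<bullet> f (x + h) - (\<Sum>k\<le>m. (u \<bullet> D k x / fact k) * h ^ k))"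
    by (simp add: inner_diff_right inner_sum_right mult_ac)
  show ?thesis
  proof
    assume "little_o_at_0 m (\<lambda>h. u \<bullet> f (x + h))"
    from little_o_at_0_diff[OF this taylor]
    have "little_o_at_0 m (\<lambda>h. \<Sum>k\<le>m. (u \<bullet> D k x / fact k) * h ^ k)" by simp
    then have "u \<bullet> D k x / fact k = 0" if "k \<le> m" for k
      by (rule polynomial_little_o_at_0_coeffs_zero[OF _ that])
    then show "\<forall>k\<le>m. u \<bullet> D k x = 0" by simp
  next
    assume "\<forall>k\<le>m. u \<bullet> D k x = 0"
    then show "little_o_at_0 m (\<lambda>h. u \<bullet> f (x + h))" using taylor by simp
  qed
qed

section \<open>Nondegenerate curves\<close>

lemma complement_of_line_decomp:
  assumes "span {d} \<inter> L = {0}" and "{x + y | x y. x \<in> span {d} \<and> y \<in> L} = UNIV"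
    and "v \<in> span {d}" "v \<noteq> 0"
  shows "v \<notin> L" "\<exists>b. y - b *\<^sub>R v \<in> L"
proof -
  show "v \<notin> L" using assms(1,3,4) by blast
  obtain a where a: "v = a *\<^sub>R d" using assms(3) by (auto simp: span_singleton)
  have "y \<in> {x + y | x y. x \<in> span {d} \<and> y \<in> L}" using assms(2) by simp
  then obtain b l where "y = b *\<^sub>R d + l" "l \<in> L" by (auto simp: span_singleton)
  then have "y - (b / a) *\<^sub>R v = l" using a assms(4) by auto
  then show "\<exists>b. y - b *\<^sub>R v \<in> L" using \<open>l \<in> L\<close> by blast
qed

lemma complement_of_line_functional:
  fixes L :: "'a::euclidean_space set"
  assumes "subspace L" "v \<notin> L" and decomp: "\<And>y. \<exists>a. y - a *\<^sub>R v \<in> L"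
  obtains w where "\<forall>l\<in>L. w \<bullet> l = 0" "w \<bullet> v = 1" "\<And>y. w \<bullet> y = 0 \<Longrightarrow> y \<in> L"
proof -
  have "span L = L" using assms(1) by (simp add: span_eq_iff)
  then have "span L \<noteq> UNIV" using assms(2) by (metis UNIV_I)
  then obtain u where "u \<noteq> 0" and u: "\<forall>l\<in>span L. u \<bullet> l = 0"
    using span_not_UNIV_orthogonal by blast
  then have uL: "\<forall>l\<in>L. u \<bullet> l = 0" by (simp add: span_base)
  have "u \<bullet> v \<noteq> 0"
  proof
    assume "u \<bullet> v = 0"
    obtain a where "u - a *\<^sub>R v \<in> L" using decomp by blast
    moreover have "u \<bullet> u = u \<bullet> (u - a *\<^sub>R v) + a * (u \<bullet> v)" by (simp add: inner_diff_right)
    ultimately have "u \<bullet> u = 0" using uL \<open>u \<bullet> v = 0\<close> by simp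
    then show False using \<open>u \<noteq> 0\<close> by simp
  qed
  define w where "w = inverse (u \<bullet> v) *\<^sub>R u"
  have wL: "\<forall>l\<in>L. w \<bullet> l = 0" using uL by (simp add: w_def)
  moreover have "w \<bullet> v = 1" using \<open>u \<bullet> v \<noteq> 0\<close> by (simp add: w_def)
  moreover have "y \<in> L" if "w \<bullet> y = 0" for y
  proof -
    obtain a where a: "y - a *\<^sub>R v \<in> L" using decomp by blast
    moreover have "w \<bullet> y = w \<bullet> (y - a *\<^sub>R v) + a * (w \<bullet> v)" by (simp add: inner_diff_right)
    ultimately have "a = 0" using wL that \<open>w \<bullet> v = 1\<close> by simp
    then show ?thesis using a by simp
  qed
  ultimately show ?thesis using that by blast
qed

lemma has_real_derivative_local_surjection:
  fixes F :: "real \<Rightarrow> real"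
  assumes "open U" "s \<in> U" "continuous_on U F"
    and deriv: "(F has_real_derivative \<alpha>) (at s)" and "\<alpha> \<noteq> 0"
  obtains c where "c > 0" "eventually (\<lambda>r. \<exists>x\<in>U. F x = F s + r \<and> \<bar>x - s\<bar> \<le> \<bar>r\<bar> / c) (nhds 0)"
proof -
  define c where "c = \<bar>\<alpha>\<bar> / 2"
  have "c > 0" using \<open>\<alpha> \<noteq> 0\<close> by (simp add: c_def)
  have "(F has_derivative (\<lambda>h. \<alpha> * h)) (at s)"
    using deriv by (simp add: has_field_derivative_def)
  then obtain d1 where "d1 > 0"
    and d1: "\<And>y. \<bar>y - s\<bar> < d1 \<Longrightarrow> \<bar>F y - F s - \<alpha> * (y - s)\<bar> \<le> c * \<bar>y - s\<bar>"
    using \<open>c > 0\<close> unfolding has_derivative_at_alt by fastforce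
  obtain dU where "dU > 0" "ball s dU \<subseteq> U" using assms(1,2) open_contains_ball by blast
  define d where "d = min d1 dU / 2"
  have "d > 0" "d < d1" "d < dU" using \<open>d1 > 0\<close> \<open>dU > 0\<close> by (auto simp: d_def)
  have inU: "x \<in> U" if "\<bar>x - s\<bar> \<le> d" for x
    using that \<open>d < dU\<close> \<open>ball s dU \<subseteq> U\<close> by (auto simp: dist_real_def)
  have "continuous_on (closed_segment (s - d) (s + d)) F"
    using inU \<open>d > 0\<close> by (intro continuous_on_subset[OF assms(3)]) (auto simp: closed_segment_eq_real_ivl)
  moreover have "eventually (\<lambda>r. \<bar>r\<bar> < c * d) (nhds 0)"
    using \<open>c > 0\<close> \<open>d > 0\<close> unfolding eventually_nhds_metric dist_real_def
    by (intro exI[of _ "c * d"]) auto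
  ultimately show ?thesis
  proof (intro that[OF \<open>c > 0\<close>], elim eventually_mono)
    fix r assume cont: "continuous_on (closed_segment (s - d) (s + d)) F" and r: "\<bar>r\<bar> < c * d"
    have "\<bar>F (s + d) - F s - \<alpha> * d\<bar> \<le> c * d" "\<bar>F (s - d) - F s + \<alpha> * d\<bar> \<le> c * d"
      using d1[of "s + d"] d1[of "s - d"] \<open>d > 0\<close> \<open>d < d1\<close> by auto
    moreover have "c * d = \<alpha> * d / 2 \<or> c * d = - \<alpha> * d / 2" by (simp add: c_def abs_if)
    ultimately have "F s + r \<in> closed_segment (F (s - d)) (F (s + d))"
      using r \<open>d > 0\<close> \<open>c > 0\<close> unfolding closed_segment_eq_real_ivl abs_le_iff abs_less_iff
      by auto
    then obtain x where x: "x \<in> closed_segment (s - d) (s + d)" "F x = F s + r"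
      using IVT'_closed_segment_real[OF _ cont] by blast
    then have "\<bar>x - s\<bar> \<le> d" using \<open>d > 0\<close> by (auto simp: closed_segment_eq_real_ivl)
    then have "\<bar>r - \<alpha> * (x - s)\<bar> \<le> c * \<bar>x - s\<bar>" using d1[of x] \<open>d < d1\<close> x(2) by simp
    moreover have "\<bar>\<alpha> * (x - s)\<bar> = 2 * (c * \<bar>x - s\<bar>)" by (simp add: c_def abs_mult)
    ultimately have "c * \<bar>x - s\<bar> \<le> \<bar>r\<bar>" by linarith
    then show "\<exists>x\<in>U. F x = F s + r \<and> \<bar>x - s\<bar> \<le> \<bar>r\<bar> / c"
      using x(2) inU[OF \<open>\<bar>x - s\<bar> \<le> d\<close>] \<open>c > 0\<close> by (auto simp: field_simps)
  qed
qed

lemma nondeg_at_slice_coordinate: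
  fixes \<phi> :: "real \<Rightarrow> real^'n::finite"
  assumes "nondeg_at \<phi> \<Omega> s"
  obtains \<rho> D' \<Omega>1 r0 w \<alpha> where "higher_diff_at (CARD('n) - 1) \<rho> 0 D'"
    "span {D' k 0 | k. k \<le> CARD('n) - 1} = UNIV" "open \<Omega>1" "s \<in> \<Omega>1" "r0 > 0"
    "w \<bullet> \<phi> s = 0" "((\<lambda>x. w \<bullet> \<phi> x) has_real_derivative \<alpha>) (at s)" "\<alpha> \<noteq> 0"
    "\<And>r x. \<bar>r\<bar> < r0 \<Longrightarrow> x \<in> \<Omega>1 \<Longrightarrow> w \<bullet> \<phi> x = r \<Longrightarrow> \<rho> r = \<phi> x"
proof -
  define d0 where "d0 = vector_derivative \<phi> (at s)"
  obtain L v \<Omega>1 r0 \<rho> where L: "subspace L" "\<phi> s \<in> L"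
    and line: "span {d0} \<inter> L = {0}" "{x + y | x y. x \<in> span {d0} \<and> y \<in> L} = UNIV"
    and v: "v \<in> span {d0}" "v \<noteq> 0" and "open \<Omega>1" "s \<in> \<Omega>1" "r0 > 0"
    and slice: "\<And>r. \<bar>r\<bar> < r0 \<Longrightarrow> \<phi> ` \<Omega>1 \<inter> (\<lambda>l. r *\<^sub>R v + l) ` L = {\<rho> r}"
    and "curve_nondeg_at \<rho> 0"
    using assms unfolding nondeg_at_def Let_def d0_def[symmetric] by blast
  then obtain D' where "higher_diff_at (CARD('n) - 1) \<rho> 0 D'"
    "span {D' k 0 | k. k \<le> CARD('n) - 1} = UNIV"
    unfolding curve_nondeg_at_def by blast
  \<comment> \<open>\<open>w \<bullet> x\<close> is the coordinate of \<open>x\<close> along \<open>v\<close>: its level set \<open>r\<close> is the slice \<open>r v + L\<close>.\<close>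
  obtain w where wL: "\<forall>l\<in>L. w \<bullet> l = 0" and "w \<bullet> v = 1"
    and kerL: "\<And>y. w \<bullet> y = 0 \<Longrightarrow> y \<in> L"
    using complement_of_line_functional[OF L(1) complement_of_line_decomp[OF line v]] by blast
  obtain a where a: "v = a *\<^sub>R d0" using v(1) by (auto simp: span_singleton)
  have "(\<phi> has_vector_derivative d0) (at s)"
    using assms unfolding d0_def nondeg_at_def by (simp add: vector_derivative_works)
  then have "((\<lambda>x. w \<bullet> \<phi> x) has_real_derivative w \<bullet> d0) (at s)"
    unfolding has_real_derivative_iff_has_vector_derivative
    by (rule bounded_linear.has_vector_derivative[OF bounded_linear_inner_right])
  moreover have "w \<bullet> d0 \<noteq> 0" using \<open>w \<bullet> v = 1\<close> a by auto
  moreover have "w \<bullet> \<phi> s = 0" using wL L(2) by blast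
  moreover have "\<rho> r = \<phi> x" if "\<bar>r\<bar> < r0" "x \<in> \<Omega>1" "w \<bullet> \<phi> x = r" for r x
  proof -
    have "w \<bullet> (\<phi> x - r *\<^sub>R v) = 0" using that(3) \<open>w \<bullet> v = 1\<close> by (simp add: inner_diff_right)
    then have "\<phi> x \<in> (\<lambda>l. r *\<^sub>R v + l) ` L" by (intro image_eqI[OF _ kerL]) auto
    then have "\<phi> x \<in> \<phi> ` \<Omega>1 \<inter> (\<lambda>l. r *\<^sub>R v + l) ` L" using that(2) by blast
    then show ?thesis using slice[OF that(1)] by simp
  qed
  ultimately show ?thesis
    using that \<open>higher_diff_at _ \<rho> 0 D'\<close> \<open>span _ = UNIV\<close> \<open>open \<Omega>1\<close> \<open>s \<in> \<Omega>1\<close> \<open>r0 > 0\<close>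
    by blast
qed

lemma nondeg_at_reparametrization:
  fixes \<phi> :: "real \<Rightarrow> real^'n::finite"
  assumes "nondeg_at \<phi> \<Omega> s" and "open U" "s \<in> U" "continuous_on U \<phi>"
  obtains \<rho> D' c where "higher_diff_at (CARD('n) - 1) \<rho> 0 D'"
    "span {D' k 0 | k. k \<le> CARD('n) - 1} = UNIV" "c > 0"
    "eventually (\<lambda>r. \<exists>y. \<bar>y\<bar> \<le> \<bar>r\<bar> / c \<and> \<rho> r = \<phi> (s + y)) (nhds 0)"
proof -
  obtain \<rho> D' \<Omega>1 r0 w \<alpha> where hd: "higher_diff_at (CARD('n) - 1) \<rho> 0 D'"
    and span: "span {D' k 0 | k. k \<le> CARD('n) - 1} = UNIV" and "open \<Omega>1" "s \<in> \<Omega>1" "r0 > 0"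
    and "w \<bullet> \<phi> s = 0" "((\<lambda>x. w \<bullet> \<phi> x) has_real_derivative \<alpha>) (at s)" "\<alpha> \<noteq> 0"
    and slice: "\<And>r x. \<bar>r\<bar> < r0 \<Longrightarrow> x \<in> \<Omega>1 \<Longrightarrow> w \<bullet> \<phi> x = r \<Longrightarrow> \<rho> r = \<phi> x"
    using nondeg_at_slice_coordinate[OF assms(1)] by blast
  have "continuous_on (U \<inter> \<Omega>1) (\<lambda>x. w \<bullet> \<phi> x)"
    by (intro continuous_intros continuous_on_subset[OF assms(4)]) auto
  then obtain c where "c > 0" and surj:
      "eventually (\<lambda>r. \<exists>x\<in>U \<inter> \<Omega>1. w \<bullet> \<phi> x = w \<bullet> \<phi> s + r \<and> \<bar>x - s\<bar> \<le> \<bar>r\<bar> / c) (nhds 0)"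
    using has_real_derivative_local_surjection[OF open_Int[OF \<open>open U\<close> \<open>open \<Omega>1\<close>]]
      \<open>s \<in> U\<close> \<open>s \<in> \<Omega>1\<close> \<open>(_ has_real_derivative \<alpha>) (at s)\<close> \<open>\<alpha> \<noteq> 0\<close> by blast
  have "eventually (\<lambda>r. \<bar>r\<bar> < r0) (nhds 0)"
    using \<open>r0 > 0\<close> unfolding eventually_nhds_metric dist_real_def by (intro exI[of _ r0]) auto
  with surj have "eventually (\<lambda>r. \<exists>y. \<bar>y\<bar> \<le> \<bar>r\<bar> / c \<and> \<rho> r = \<phi> (s + y)) (nhds 0)"
  proof eventually_elim
    case (elim r)
    then obtain x where "x \<in> \<Omega>1" "w \<bullet> \<phi> x = r" "\<bar>x - s\<bar> \<le> \<bar>r\<bar> / c"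
      using \<open>w \<bullet> \<phi> s = 0\<close> by auto
    then show ?case using slice[OF \<open>\<bar>r\<bar> < r0\<close>] by (intro exI[of _ "x - s"]) simp
  qed
  then show ?thesis by (rule that[OF hd span \<open>c > 0\<close>])
qed

lemma nondeg_at_derivatives_span:
  fixes \<phi> :: "real \<Rightarrow> real^'n::finite"
  assumes "2 \<le> CARD('n)" and hd: "higher_diff_at (CARD('n)) \<phi> s D" and "nondeg_at \<phi> \<Omega> s"
  shows "span {D k s | k. k \<le> CARD('n) - 1} = UNIV"
proof (rule ccontr)
  define n where "n = CARD('n) - 1"
  have "0 < n" "CARD('n) = Suc n" using assms(1) by (auto simp: n_def)
  assume "span {D k s | k. k \<le> CARD('n) - 1} \<noteq> UNIV"
  then obtain u :: "real^'n" where "u \<noteq> 0" and "\<forall>x\<in>span {D k s | k. k \<le> n}. u \<bullet> x = 0"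
    using span_not_UNIV_orthogonal unfolding n_def by blast
  then have u: "\<forall>k\<le>n. u \<bullet> D k s = 0" by (auto intro: span_base)
  from hd obtain U where "open U" "s \<in> U" "D 0 = \<phi>"
    and U: "\<forall>k. Suc k < CARD('n) \<longrightarrow> (\<forall>y\<in>U. (D k has_vector_derivative D (Suc k) y) (at y))"
    unfolding higher_diff_at_def by blast
  have "continuous_on U \<phi>"
    using U \<open>D 0 = \<phi>\<close> \<open>0 < n\<close> \<open>CARD('n) = Suc n\<close>
    by (intro continuous_at_imp_continuous_on) (auto intro: has_vector_derivative_continuous)
  then obtain \<rho> D' c where hd\<rho>: "higher_diff_at n \<rho> 0 D'"
    and span\<rho>: "span {D' k 0 | k. k \<le> n} = UNIV" and "c > 0"
    and param: "eventually (\<lambda>r. \<exists>y. \<bar>y\<bar> \<le> \<bar>r\<bar> / c \<and> \<rho> r = \<phi> (s + y)) (nhds 0)"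
    using nondeg_at_reparametrization[OF \<open>nondeg_at \<phi> \<Omega> s\<close> \<open>open U\<close> \<open>s \<in> U\<close>]
    unfolding n_def by blast
  have "higher_diff_at n \<phi> s D"
    using higher_diff_at_Suc_imp hd \<open>CARD('n) = Suc n\<close> by simp
  then have "little_o_at_0 n (\<lambda>h. u \<bullet> \<phi> (s + h))"
    using higher_diff_at_inner_little_o_iff \<open>0 < n\<close> u by blast
  then have "little_o_at_0 n (\<lambda>r. u \<bullet> \<rho> (0 + r))"
    by (rule little_o_at_0_reparametrize[OF _ \<open>c > 0\<close>]) (use param in \<open>auto elim!: eventually_mono\<close>)
  then have "\<forall>k\<le>n. u \<bullet> D' k 0 = 0"
    using higher_diff_at_inner_little_o_iff[OF hd\<rho> \<open>0 < n\<close>] by blast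
  then have "span {D' k 0 | k. k \<le> n} \<subseteq> {x. u \<bullet> x = 0}"
    by (intro span_minimal) (auto simp: subspace_hyperplane)
  then have "u \<bullet> u = 0" using span\<rho> by blast
  then show False using \<open>u \<noteq> 0\<close> by simp
qed

section \<open>The shift matrix of a Taylor basis\<close>

lemma matrix_matrix_mult_row: "((A::real^'n^'m) ** (C::real^'p^'n)) $ i = A $ i v* C"
  by (simp add: matrix_matrix_mult_def vector_matrix_mult_def vec_eq_iff mult.commute)

lemma vector_matrix_mult_as_sum: "(x::real^'n) v* (M::real^'p^'n) = (\<Sum>j\<in>UNIV. x $ j *\<^sub>R M $ j)"
  by (simp add: vector_matrix_mult_def vec_eq_iff sum_component mult.commute)

lemma vector_matrix_mult_sum: "(\<Sum>k\<in>A. x k) v* (M::real^'m^'n) = (\<Sum>k\<in>A. x k v* M)"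
  by (induction A rule: infinite_finite_induct) (simp_all add: vector_matrix_left_distrib)

lemma bounded_linear_vector_matrix_mult: "bounded_linear (\<lambda>x. x v* (M::real^'m^'n))"
proof -
  have "(\<lambda>x. x v* M) = (*v) (transpose M)" by (rule ext) simp
  then show ?thesis by simp
qed

lemma matrix_eq_0_if_vector_matrix_mult_eq_0:
  assumes "\<And>x. x v* (M::real^'m^'n) = 0"
  shows "M = 0"
proof -
  have "transpose M *v x = 0 *v x" for x using assms by simp
  then have "transpose M = 0" by (simp add: matrix_eq)
  then have "transpose (transpose M) = 0" by (simp add: transpose_def vec_eq_iff)
  then show ?thesis by simp
qed

lemma span_image_scaleR_nonzero:
  assumes "\<And>k. k \<in> A \<Longrightarrow> c k \<noteq> 0"
  shows "span ((\<lambda>k. c k *\<^sub>R f k) ` A) = span (f ` A)"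
proof -
  have "f k \<in> span ((\<lambda>k. c k *\<^sub>R f k) ` A)" if "k \<in> A" for k
  proof -
    have "inverse (c k) *\<^sub>R (c k *\<^sub>R f k) \<in> span ((\<lambda>k. c k *\<^sub>R f k) ` A)"
      using that by (intro span_scale span_base) simp
    then show ?thesis using assms[OF that] by simp
  qed
  then have "f ` A \<subseteq> span ((\<lambda>k. c k *\<^sub>R f k) ` A)" by auto
  moreover have "c k *\<^sub>R f k \<in> span (f ` A)" if "k \<in> A" for k
    using that by (intro span_scale span_base) simp
  then have "(\<lambda>k. c k *\<^sub>R f k) ` A \<subseteq> span (f ` A)" by auto
  ultimately show ?thesis by (simp add: span_eq)
qed

lemma spanning_family_independent:
  fixes v :: "nat \<Rightarrow> real^'n::finite"
  assumes "CARD('n) = Suc n" and "span (v ` {..n}) = UNIV"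
  shows "independent (v ` {..n})" "inj_on v {..n}"
proof -
  have "card (v ` {..n}) \<le> dim (UNIV :: (real^'n) set)"
    using card_image_le[of "{..n}" v] assms(1) by simp
  then show indep: "independent (v ` {..n})"
    using card_le_dim_spanning[of "v ` {..n}" UNIV] assms(2) by auto
  then have "card (v ` {..n}) = card {..n}"
    using dim_span_eq_card_independent[OF indep] assms by simp
  then show "inj_on v {..n}" by (intro eq_card_imp_inj_on) simp_all
qed

lemma shift_matrix_exists:
  fixes v :: "nat \<Rightarrow> real^'n::finite"
  assumes "CARD('n) = Suc n" and "span (v ` {..n}) = UNIV"
  obtains B :: "real^'n^'n" where "v 0 v* B = 0" "\<forall>k<n. v (Suc k) v* B = v k"
proof -
  note indep = spanning_family_independent[OF assms]
  define f where "f x = (let k = inv_into {..n} v x in if k = 0 then 0 else v (k - 1))" for x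
  obtain g where "linear g" and gf: "\<forall>x\<in>v ` {..n}. g x = f x"
    using linear_independent_extend[OF indep(1)] by blast
  define B where "B = transpose (matrix g)"
  have Bg: "x v* B = g x" for x
    unfolding B_def using matrix_vector_mul(2)[OF \<open>linear g\<close>] by simp
  have "g (v k) = (if k = 0 then 0 else v (k - 1))" if "k \<le> n" for k
    using gf inv_into_f_f[OF indep(2)] that by (simp add: f_def)
  then show ?thesis using that[of B] by (simp add: Bg)
qed

lemma shift_matrix_nilpotent:
  fixes v :: "nat \<Rightarrow> real^'n::finite" and B :: "real^'n^'n"
  assumes span: "span (v ` {..n}) = UNIV" and B0: "v 0 v* B = 0" and Bs: "\<forall>k<n. v (Suc k) v* B = v k"
  shows "nilpotent_mat B"
proof -
  define P where "P k = (((**) B) ^^ k) (mat 1)" for k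
  have shift: "v j v* P k = (if k \<le> j then v (j - k) else 0)" if "j \<le> n" for j k
    using that
  proof (induction k arbitrary: j)
    case 0
    then show ?case by (simp add: P_def)
  next
    case (Suc k)
    have "v j v* P (Suc k) = (v j v* B) v* P k" by (simp add: P_def vector_matrix_mul_assoc)
    then show ?case using Suc B0 Bs by (cases j) auto
  qed
  have "x v* P (Suc n) = 0" for x
  proof (rule linear_eq_0_on_span[OF bounded_linear.linear[OF bounded_linear_vector_matrix_mult]])
    show "x \<in> span (v ` {..n})" using span by simp
  qed (auto simp: shift)
  then have "P (Suc n) = 0" by (rule matrix_eq_0_if_vector_matrix_mult_eq_0)
  then show ?thesis unfolding nilpotent_mat_def P_def by blast
qed

lemma shift_matrix_rank:
  fixes v :: "nat \<Rightarrow> real^'n::finite" and B :: "real^'n^'n"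
  assumes "CARD('n) = Suc n" and span: "span (v ` {..n}) = UNIV"
    and B0: "v 0 v* B = 0" and Bs: "\<forall>k<n. v (Suc k) v* B = v k"
  shows "rank B = n"
proof -
  note indep = spanning_family_independent[OF assms(1,2)]
  have "rank B = dim (range (\<lambda>x. x v* B))"
    using rank_transpose[of B] rank_dim_range[of "transpose B"] by simp
  also have "range (\<lambda>x. x v* B) = span ((\<lambda>x. x v* B) ` v ` {..n})"
    using span_linear_image[OF bounded_linear.linear[OF bounded_linear_vector_matrix_mult[of B]],
        of "v ` {..n}"] span by simp
  also have "(\<lambda>x. x v* B) ` v ` {..n} = insert 0 (v ` {..<n})"
  proof -
    have "(\<lambda>x. x v* B) ` v ` {..n} = insert (v 0 v* B) ((\<lambda>k. v (Suc k) v* B) ` {..<n})"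
      by (simp add: lessThan_Suc_atMost[symmetric] lessThan_Suc_eq_insert_0 image_image)
    then show ?thesis using B0 Bs by simp
  qed
  also have "dim (span (insert 0 (v ` {..<n}))) = card (v ` {..<n})"
  proof -
    have "independent (v ` {..<n})" by (rule independent_mono[OF indep(1)]) auto
    then show ?thesis by (simp add: dim_eq_card_independent)
  qed
  also have "\<dots> = n"
  proof -
    have "inj_on v {..<n}" by (rule inj_on_subset[OF indep(2)]) auto
    then show ?thesis by (simp add: card_image)
  qed
  finally show ?thesis .
qed

lemma finite_wellorder_enumeration:
  obtains idx :: "'n::{finite,wellorder} \<Rightarrow> nat" where "strict_mono idx" "range idx = {..<CARD('n)}"
proof
  define idx :: "'n \<Rightarrow> nat" where "idx i = card {j. j < i}" for i
  show "strict_mono idx"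
    unfolding idx_def by (rule strict_monoI, rule psubset_card_mono) (auto intro: less_trans)
  then have "inj idx" by (rule strict_mono_imp_inj_on)
  have "idx i < CARD('n)" for i
    unfolding idx_def by (rule psubset_card_mono) auto
  then show "range idx = {..<CARD('n)}"
    using card_image[OF \<open>inj idx\<close>] by (intro card_subset_eq) auto
qed

lemma det_one_minus_conjugate:
  fixes W B S :: "real^'n^'n"
  assumes "det W \<noteq> 0" "W ** B = S ** W"
  shows "det (mat 1 - t *\<^sub>R B) = det (mat 1 - t *\<^sub>R S)"
proof -
  have "W $ i v* B = S $ i v* W" "mat 1 $ i v* W = W $ i" for i
    using assms(2) matrix_matrix_mult_row[of W B i] matrix_matrix_mult_row[of S W i]
      matrix_matrix_mult_row[of "mat 1" W i] by simp_all
  then have "W ** (mat 1 - t *\<^sub>R B) = (mat 1 - t *\<^sub>R S) ** W"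
    by (simp add: vec_eq_iff matrix_matrix_mult_row vector_matrix_mult_diff_rdistrib
        vector_matrix_mult_diff_distrib vector_scaleR_matrix_ac scaleR_vector_matrix_assoc)
  then have "det W * det (mat 1 - t *\<^sub>R B) = det (mat 1 - t *\<^sub>R S) * det W"
    by (metis det_mul)
  then show ?thesis using assms(1) by simp
qed

lemma det_one_minus_strictly_lower_triangular:
  fixes S :: "real^('n::{finite,wellorder})^('n::{finite,wellorder})"
  assumes "\<And>i j. i \<le> j \<Longrightarrow> S $ i $ j = 0"
  shows "det (mat 1 - t *\<^sub>R S) = 1"
proof -
  have "(mat 1 - t *\<^sub>R S) $ i $ j = 0" if "i < j" for i j
    using assms[of i j] that by (simp add: mat_def)
  then have "det (mat 1 - t *\<^sub>R S) = (\<Prod>i\<in>UNIV. (mat 1 - t *\<^sub>R S) $ i $ i)"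
    by (rule det_lowerdiagonal)
  also have "\<dots> = 1" using assms by (simp add: mat_def)
  finally show ?thesis .
qed

lemma det_one_minus_shift_matrix:
  fixes v :: "nat \<Rightarrow> real^('n::{finite,wellorder})"
    and B :: "real^('n::{finite,wellorder})^('n::{finite,wellorder})"
  assumes "CARD('n) = Suc n" and span: "span (v ` {..n}) = UNIV"
    and B0: "v 0 v* B = 0" and Bs: "\<forall>k<n. v (Suc k) v* B = v k"
  shows "det (mat 1 - t *\<^sub>R B) = 1"
proof -
  \<comment> \<open>In the basis \<open>v\<close>, ordered like the index type, \<open>B\<close> is the strictly lower triangular shift \<open>S\<close>.\<close>
  obtain idx :: "'n \<Rightarrow> nat" where "strict_mono idx" and range: "range idx = {..n}"
    using finite_wellorder_enumeration \<open>CARD('n) = Suc n\<close> lessThan_Suc_atMost by metis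
  have "inj idx" using \<open>strict_mono idx\<close> by (rule strict_mono_imp_inj_on)
  define W :: "real^('n::{finite,wellorder})^('n::{finite,wellorder})" where "W = (\<chi> i. v (idx i))"
  define S :: "real^('n::{finite,wellorder})^('n::{finite,wellorder})"
    where "S = (\<chi> i j. if idx i = Suc (idx j) then 1 else 0)"
  have "rows W = v ` {..n}"
    unfolding rows_def row_def W_def using range by (auto simp: vec_lambda_eta image_iff) (metis atMost_iff rangeE)
  then have "det W \<noteq> 0"
    using span matrix_left_invertible_span_rows invertible_left_inverse invertible_det_nz by metis
  moreover have "(W ** B) $ i = (S ** W) $ i" for i
  proof (cases "idx i")
    case 0
    then show ?thesis using B0
      by (simp add: matrix_matrix_mult_row vector_matrix_mult_as_sum S_def W_def)
  next
    case (Suc k)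
    then have "k < n" using range by (metis Suc_le_eq atMost_iff rangeI)
    then obtain j where "idx j = k" using range by (metis atMost_iff image_iff less_imp_le_nat)
    have "(\<Sum>l\<in>UNIV. (if idx i = Suc (idx l) then 1 else 0) *\<^sub>R v (idx l)) = (\<Sum>l\<in>UNIV. if l = j then v k else 0)"
      by (rule sum.cong) (use Suc \<open>idx j = k\<close> \<open>inj idx\<close> in \<open>auto dest: injD\<close>)
    then show ?thesis using Bs Suc \<open>k < n\<close>
      by (simp add: matrix_matrix_mult_row vector_matrix_mult_as_sum S_def W_def)
  qed
  then have "W ** B = S ** W" by (simp add: vec_eq_iff)
  moreover have "S $ i $ j = 0" if "i \<le> j" for i j
  proof -
    have "idx i \<le> idx j" using strict_mono_less_eq[OF \<open>strict_mono idx\<close>] that by simp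
    then show ?thesis by (simp add: S_def)
  qed
  ultimately show ?thesis
    using det_one_minus_conjugate det_one_minus_strictly_lower_triangular by metis
qed

lemma shift_matrix_taylor_poly:
  fixes v :: "nat \<Rightarrow> real^'n::finite" and B :: "real^'n^'n" and h :: real
  assumes B0: "v 0 v* B = 0" and Bs: "\<forall>k<n. v (Suc k) v* B = v k"
  defines "P \<equiv> (\<Sum>k\<le>Suc n. h ^ k *\<^sub>R v k)"
  shows "h *\<^sub>R P - P v* B = h ^ Suc n *\<^sub>R (v n - v (Suc n) v* B) + h ^ Suc (Suc n) *\<^sub>R v (Suc n)"
proof -
  have "(\<Sum>k\<le>Suc n. h ^ k *\<^sub>R v k) v* B = (\<Sum>k\<le>Suc n. h ^ k *\<^sub>R (v k v* B))"
    by (simp only: vector_matrix_mult_sum scaleR_vector_matrix_assoc)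
  also have "\<dots> = (\<Sum>k<Suc n. h ^ Suc k *\<^sub>R (v (Suc k) v* B))"
    using B0 by (simp only: sum.atMost_Suc_shift lessThan_Suc_atMost) simp
  also have "\<dots> = (\<Sum>k<n. h ^ Suc k *\<^sub>R v k) + h ^ Suc n *\<^sub>R (v (Suc n) v* B)"
    using Bs by (simp del: power_Suc)
  finally have PB: "P v* B = (\<Sum>k<n. h ^ Suc k *\<^sub>R v k) + h ^ Suc n *\<^sub>R (v (Suc n) v* B)"
    unfolding P_def .
  have "h *\<^sub>R P = (\<Sum>k<n. h ^ Suc k *\<^sub>R v k) + h ^ Suc n *\<^sub>R v n + h ^ Suc (Suc n) *\<^sub>R v (Suc n)"
    by (simp add: P_def scaleR_sum_right scaleR_add_right lessThan_Suc_atMost[symmetric])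
  then show ?thesis unfolding PB by (simp add: algebra_simps)
qed

section \<open>Asymptotics of the renormalized curve\<close>

lemma tendsto_bounded_scaleR_zero:
  fixes f :: "'a \<Rightarrow> 'b::real_normed_vector"
  assumes "(f \<longlongrightarrow> 0) F" "\<And>x. \<bar>c x\<bar> \<le> 1"
  shows "((\<lambda>x. c x *\<^sub>R f x) \<longlongrightarrow> 0) F"
proof (rule Lim_null_comparison)
  show "eventually (\<lambda>x. norm (c x *\<^sub>R f x) \<le> norm (f x)) F"
    using assms(2) by (intro always_eventually allI) (simp add: mult_left_le_one_le)
  show "((\<lambda>x. norm (f x)) \<longlongrightarrow> 0) F" using assms(1) by (rule tendsto_norm_zero)
qed

lemma shift_matrix_renormalized_row:
  fixes v :: "nat \<Rightarrow> real^'n::finite" and B :: "real^'n^'n" and R :: "real^'n"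
  assumes B0: "v 0 v* B = 0" and Bs: "\<forall>k<n. v (Suc k) v* B = v k" and "t \<noteq> 0"
  shows "\<bar>t\<bar> ^ n *\<^sub>R (((\<Sum>k\<le>Suc n. inverse t ^ k *\<^sub>R v k) + R) v* (mat 1 - t *\<^sub>R B))
           - sgn t ^ n *\<^sub>R (v n - v (Suc n) v* B)
         = sgn t ^ n *\<^sub>R (inverse t *\<^sub>R (v (Suc n) + t ^ Suc n *\<^sub>R R) - (t ^ Suc n *\<^sub>R R) v* B)"
proof -
  define h where "h = inverse t"
  define P where "P = (\<Sum>k\<le>Suc n. h ^ k *\<^sub>R v k)"
  have "t * h = 1" using \<open>t \<noteq> 0\<close> by (simp add: h_def)
  have "(P + R) v* (mat 1 - t *\<^sub>R B) = t *\<^sub>R (h *\<^sub>R (P + R) - (P + R) v* B)"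
    using \<open>t * h = 1\<close> by (simp add: vector_matrix_mult_diff_rdistrib vector_scaleR_matrix_ac scaleR_diff_right)
  moreover have "\<bar>t\<bar> ^ n * t = sgn t ^ n * t ^ Suc n"
    by (simp add: abs_sgn power_mult_distrib)
  ultimately have "\<bar>t\<bar> ^ n *\<^sub>R ((P + R) v* (mat 1 - t *\<^sub>R B))
      = sgn t ^ n *\<^sub>R (t ^ Suc n *\<^sub>R (h *\<^sub>R (P + R) - (P + R) v* B))"
    by (simp only: scaleR_scaleR)
  also have "t ^ Suc n *\<^sub>R (h *\<^sub>R (P + R) - (P + R) v* B)
      = t ^ Suc n *\<^sub>R (h *\<^sub>R P - P v* B) + h *\<^sub>R (t ^ Suc n *\<^sub>R R) - (t ^ Suc n *\<^sub>R R) v* B"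
    using \<open>t * h = 1\<close> by (simp add: vector_matrix_left_distrib scaleR_vector_matrix_assoc algebra_simps)
  also have "t ^ Suc n *\<^sub>R (h *\<^sub>R P - P v* B) = (v n - v (Suc n) v* B) + h *\<^sub>R v (Suc n)"
  proof -
    have "t ^ Suc n * h ^ Suc n = 1"
      using \<open>t * h = 1\<close> power_mult_distrib[of t h "Suc n"] by (simp del: power_Suc)
    moreover have "t ^ Suc n * h ^ Suc (Suc n) = h"
      using \<open>t ^ Suc n * h ^ Suc n = 1\<close> by (metis mult.left_commute mult_1_right power_Suc)
    ultimately show ?thesis
      unfolding P_def shift_matrix_taylor_poly[OF B0 Bs] by (simp only: scaleR_add_right scaleR_scaleR scaleR_one)
  qed
  finally show ?thesis by (simp add: P_def h_def algebra_simps)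
qed

lemma first_row_limit:
  fixes \<phi> :: "real \<Rightarrow> real^'n::finite" and B :: "real^'n^'n"
  assumes B0: "v 0 v* B = 0" and Bs: "\<forall>k<n. v (Suc k) v* B = v k"
    and taylor: "little_o_at_0 (Suc n) (\<lambda>h. \<phi> (s + h) - (\<Sum>k\<le>Suc n. h ^ k *\<^sub>R v k))"
  shows "((\<lambda>t. \<bar>t\<bar> ^ n *\<^sub>R (\<phi> (s + inverse t) v* (mat 1 - t *\<^sub>R B))
            - sgn t ^ n *\<^sub>R (v n - v (Suc n) v* B)) \<longlongrightarrow> 0) at_infinity"
proof -
  define R where "R t = t ^ Suc n *\<^sub>R (\<phi> (s + inverse t) - (\<Sum>k\<le>Suc n. inverse t ^ k *\<^sub>R v k))" for t
  have "(R \<longlongrightarrow> 0) at_infinity"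
    unfolding R_def using little_o_at_0_at_infinity[OF taylor] by simp
  then have "((\<lambda>t. inverse t *\<^sub>R (v (Suc n) + R t) - R t v* B) \<longlongrightarrow> 0) at_infinity"
    using tendsto_diff[OF tendsto_scaleR[OF tendsto_inverse_0 tendsto_add[OF tendsto_const]]
        bounded_linear.tendsto_zero[OF bounded_linear_vector_matrix_mult]]
    by simp
  then have lim: "((\<lambda>t. sgn t ^ n *\<^sub>R (inverse t *\<^sub>R (v (Suc n) + R t) - R t v* B)) \<longlongrightarrow> 0) at_infinity"
    by (rule tendsto_bounded_scaleR_zero) (unfold power_abs, rule power_le_one, simp_all add: abs_sgn_eq)
  have eq: "\<bar>t\<bar> ^ n *\<^sub>R (\<phi> (s + inverse t) v* (mat 1 - t *\<^sub>R B)) - sgn t ^ n *\<^sub>R (v n - v (Suc n) v* B)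
      = sgn t ^ n *\<^sub>R (inverse t *\<^sub>R (v (Suc n) + R t) - R t v* B)" if "t \<noteq> 0" for t
    using shift_matrix_renormalized_row[OF B0 Bs that,
        of "\<phi> (s + inverse t) - (\<Sum>k\<le>Suc n. inverse t ^ k *\<^sub>R v k)"]
    by (simp add: R_def)
  show ?thesis
    by (rule Lim_transform_eventually[OF lim eventually_mono[OF eventually_not_equal_at_infinity eq[symmetric]]])
qed

lemma other_row_limit:
  fixes \<psi> :: "real \<Rightarrow> real^'n::finite" and B :: "real^'n^'n"
  assumes "isCont \<psi> s"
  shows "((\<lambda>t. inverse \<bar>t\<bar> *\<^sub>R (\<psi> (s + inverse t) v* (mat 1 - t *\<^sub>R B)) + sgn t *\<^sub>R (\<psi> s v* B))
           \<longlongrightarrow> 0) at_infinity"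
proof -
  have lim: "((\<lambda>t. \<psi> (s + inverse t)) \<longlongrightarrow> \<psi> s) at_infinity"
    using isCont_tendsto_compose[OF assms, of "\<lambda>t. s + inverse t"]
      tendsto_add[OF tendsto_const tendsto_inverse_0, of s] by simp
  then have "((\<lambda>t. \<bar>inverse t\<bar> *\<^sub>R \<psi> (s + inverse t)) \<longlongrightarrow> 0) at_infinity"
    using tendsto_scaleR[OF tendsto_rabs_zero[OF tendsto_inverse_0] lim] by simp
  moreover have "((\<lambda>t. sgn t *\<^sub>R ((\<psi> (s + inverse t) - \<psi> s) v* B)) \<longlongrightarrow> 0) at_infinity"
    using lim by (intro tendsto_bounded_scaleR_zero bounded_linear.tendsto_zero[OF bounded_linear_vector_matrix_mult])
      (auto simp: LIM_zero_iff abs_sgn)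
  ultimately have "((\<lambda>t. \<bar>inverse t\<bar> *\<^sub>R \<psi> (s + inverse t) - sgn t *\<^sub>R ((\<psi> (s + inverse t) - \<psi> s) v* B))
      \<longlongrightarrow> 0) at_infinity"
    using tendsto_diff by fastforce
  moreover have "inverse \<bar>t\<bar> * t = sgn t" for t :: real by (simp add: sgn_real_def)
  ultimately show ?thesis
    by (simp add: vector_matrix_mult_diff_rdistrib vector_matrix_mult_diff_distrib vector_scaleR_matrix_ac
        abs_inverse algebra_simps)
qed

lemma a_diag_mult_row:
  "(a_diag r ** M) $ i = (if i = first_idx then r ^ (CARD('n) - 1) else inverse r) *\<^sub>R (M::real^'p^('n::{finite,wellorder})) $ i"
proof -
  have "(a_diag r ** M) $ i = (\<Sum>j\<in>UNIV. (a_diag r :: real^('n::{finite,wellorder})^('n::{finite,wellorder})) $ i $ j *\<^sub>R M $ j)"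
    by (simp add: matrix_matrix_mult_row vector_matrix_mult_as_sum)
  also have "\<dots> = (\<Sum>j\<in>UNIV. if j = i then (if i = first_idx then r ^ (CARD('n) - 1) else inverse r) *\<^sub>R M $ j else 0)"
    by (rule sum.cong) (auto simp: a_diag_def)
  finally show ?thesis by simp
qed

lemma det_a_diag:
  assumes "r > 0"
  shows "det (a_diag r :: real^('n::{finite,wellorder})^('n::{finite,wellorder})) = 1"
proof -
  define f :: "'n \<Rightarrow> real" where "f i = (if i = first_idx then r ^ (CARD('n) - 1) else inverse r)" for i
  have "det (a_diag r :: real^('n::{finite,wellorder})^('n::{finite,wellorder})) = (\<Prod>i\<in>UNIV. f i)"
    by (subst det_diagonal) (simp_all add: a_diag_def f_def)
  also have "\<dots> = f first_idx * (\<Prod>i\<in>UNIV - {first_idx}. f i)"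
    by (rule prod.remove) auto
  also have "(\<Prod>i\<in>UNIV - {first_idx}. f i) = (\<Prod>i\<in>UNIV - {first_idx :: 'n}. inverse r)"
    by (rule prod.cong) (auto simp: f_def)
  also have "f first_idx * \<dots> = r ^ (CARD('n) - 1) * inverse r ^ (CARD('n) - 1)"
    by (simp add: f_def card_Diff_singleton)
  also have "\<dots> = 1" using assms by (simp add: power_mult_distrib[symmetric])
  finally show ?thesis .
qed

lemma renormalized_curve_limit:
  fixes \<Phi> :: "real \<Rightarrow> real^('n::{finite,wellorder})^('n::{finite,wellorder})"
    and B :: "real^('n::{finite,wellorder})^('n::{finite,wellorder})"
  assumes "CARD('n) = Suc n" and "isCont \<Phi> s"
    and B0: "v 0 v* B = 0" and Bs: "\<forall>k<n. v (Suc k) v* B = v k"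
    and taylor: "little_o_at_0 (Suc n) (\<lambda>h. \<Phi> (s + h) $ first_idx - (\<Sum>k\<le>Suc n. h ^ k *\<^sub>R v k))"
  obtains \<xi>p \<xi>m where
    "((\<lambda>t. a_diag \<bar>t\<bar> ** \<Phi> (s + inverse t) ** (mat 1 - t *\<^sub>R B) - (if t > 0 then \<xi>p else \<xi>m))
        \<longlongrightarrow> 0) at_infinity"
proof -
  define \<xi> where "\<xi> \<sigma> = (\<chi> i. if i = first_idx then \<sigma> ^ n *\<^sub>R (v n - v (Suc n) v* B)
                                else - \<sigma> *\<^sub>R (\<Phi> s $ i v* B))" for \<sigma> :: real
  have row: "(a_diag \<bar>t\<bar> ** \<Phi> (s + inverse t) ** (mat 1 - t *\<^sub>R B) - \<xi> (sgn t)) $ i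
      = (if i = first_idx
         then \<bar>t\<bar> ^ n *\<^sub>R (\<Phi> (s + inverse t) $ i v* (mat 1 - t *\<^sub>R B)) - sgn t ^ n *\<^sub>R (v n - v (Suc n) v* B)
         else inverse \<bar>t\<bar> *\<^sub>R (\<Phi> (s + inverse t) $ i v* (mat 1 - t *\<^sub>R B)) + sgn t *\<^sub>R (\<Phi> s $ i v* B))"
    for t i
    using \<open>CARD('n) = Suc n\<close>
    by (simp add: \<xi>_def matrix_matrix_mult_row[of "a_diag \<bar>t\<bar> ** \<Phi> (s + inverse t)"] a_diag_mult_row
        scaleR_vector_matrix_assoc)
  have lim: "((\<lambda>t. a_diag \<bar>t\<bar> ** \<Phi> (s + inverse t) ** (mat 1 - t *\<^sub>R B) - \<xi> (sgn t)) \<longlongrightarrow> 0) at_infinity"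
  proof (rule vec_tendstoI)
    fix i
    have cont: "isCont (\<lambda>x. \<Phi> x $ i) s" using \<open>isCont \<Phi> s\<close> by (rule isCont_vec_nth)
    show "((\<lambda>t. (a_diag \<bar>t\<bar> ** \<Phi> (s + inverse t) ** (mat 1 - t *\<^sub>R B) - \<xi> (sgn t)) $ i) \<longlongrightarrow> 0 $ i) at_infinity"
      unfolding row using first_row_limit[OF B0 Bs taylor] other_row_limit[OF cont, of B]
      by (cases "i = first_idx") simp_all
  qed
  have "((\<lambda>t. a_diag \<bar>t\<bar> ** \<Phi> (s + inverse t) ** (mat 1 - t *\<^sub>R B) - (if t > 0 then \<xi> 1 else \<xi> (-1)))
      \<longlongrightarrow> 0) at_infinity"
    using lim by (rule Lim_transform_eventually)
      (use eventually_not_equal_at_infinity[of 0] in \<open>auto elim!: eventually_mono\<close>)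
  then show ?thesis by (rule that)
qed

section \<open>Factorization through the one-sided limits\<close>

lemma tendsto_det:
  fixes f :: "'a \<Rightarrow> real^'n^'n"
  assumes "(f \<longlongrightarrow> A) F"
  shows "((\<lambda>x. det (f x)) \<longlongrightarrow> det A) F"
  unfolding det_def by (intro tendsto_intros tendsto_vec_nth assms)

lemma tendsto_matrix_mult_right_zero:
  fixes f :: "'a \<Rightarrow> real^'n^'m"
  assumes "(f \<longlongrightarrow> 0) F"
  shows "((\<lambda>x. f x ** (Y::real^'p^'n)) \<longlongrightarrow> 0) F"
proof (rule vec_tendstoI)
  fix i
  have "((\<lambda>x. f x $ i) \<longlongrightarrow> 0) F" using tendsto_vec_nth[OF assms, of i] by simp
  then have "((\<lambda>x. f x $ i v* Y) \<longlongrightarrow> 0) F"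
    by (rule bounded_linear.tendsto_zero[OF bounded_linear_vector_matrix_mult])
  then show "((\<lambda>x. (f x ** Y) $ i) \<longlongrightarrow> 0 $ i) F" by (simp add: matrix_matrix_mult_row)
qed

lemma matrix_inv_mult:
  fixes A :: "real^'n^'n"
  assumes "invertible A"
  shows "A ** matrix_inv A = mat 1" "matrix_inv A ** A = mat 1"
proof -
  have "\<exists>A'. A ** A' = mat 1 \<and> A' ** A = mat 1" using assms unfolding invertible_def by blast
  then have "A ** matrix_inv A = mat 1 \<and> matrix_inv A ** A = mat 1"
    unfolding matrix_inv_def by (rule someI_ex)
  then show "A ** matrix_inv A = mat 1" "matrix_inv A ** A = mat 1" by auto
qed

lemma matrix_mult_right_cancel:
  fixes N :: "real^'n^'n"
  assumes "invertible N" "A ** N = C"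
  shows "A = C ** matrix_inv N"
  using assms by (simp add: matrix_inv_mult(1) flip: assms(2) matrix_mul_assoc)

lemma det_one_sided_limits:
  fixes K :: "real \<Rightarrow> real^'n^'n"
  assumes lim: "((\<lambda>t. K t - (if t > 0 then P else M)) \<longlongrightarrow> 0) at_infinity"
    and det: "eventually (\<lambda>t. det (K t) = 1) at_infinity"
  shows "det P = 1" "det M = 1"
proof -
  have "det X = 1" if "F \<le> at_infinity" "F \<noteq> bot" "eventually (\<lambda>t. (if t > 0 then P else M) = X) F"
    for F :: "real filter" and X
  proof -
    have "((\<lambda>t. (K t - (if t > 0 then P else M)) + X) \<longlongrightarrow> 0 + X) F"
      using tendsto_mono[OF \<open>F \<le> at_infinity\<close> lim] by (intro tendsto_add tendsto_const)
    then have "(K \<longlongrightarrow> X) F"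
      by (simp add: Lim_transform_eventually[OF _ eventually_mono[OF that(3)]])
    then have "((\<lambda>t. det (K t)) \<longlongrightarrow> det X) F" by (rule tendsto_det)
    moreover have "((\<lambda>t. det (K t)) \<longlongrightarrow> 1) F"
      using filter_leD[OF \<open>F \<le> at_infinity\<close> det] by (rule tendsto_eventually)
    ultimately show ?thesis using tendsto_unique[OF \<open>F \<noteq> bot\<close>] by blast
  qed
  note side = this
  have "eventually (\<lambda>t::real. (if t > 0 then P else M) = P) at_top"
    by (rule eventually_mono[OF eventually_gt_at_top[of "0::real"]]) simp
  then show "det P = 1" using side[OF at_top_le_at_infinity] by simp
  have "eventually (\<lambda>t::real. (if t > 0 then P else M) = M) at_bot"
    by (rule eventually_mono[OF eventually_le_at_bot[of "0::real"]]) simp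
  then show "det M = 1" using side[OF at_bot_le_at_infinity] by simp
qed

lemma two_sided_factorization:
  fixes K :: "real \<Rightarrow> real^'n^'n"
  assumes lim: "((\<lambda>t. K t - (if t > 0 then P else M)) \<longlongrightarrow> 0) at_infinity"
    and "invertible P" "invertible M"
  obtains E where "((\<lambda>t. t *\<^sub>R E t) \<longlongrightarrow> 0) at_infinity"
    "\<And>t. t \<noteq> 0 \<Longrightarrow> K t = (mat 1 + t *\<^sub>R E t) ** (if t > 0 then P else M)"
proof
  define X where "X t = (if t > 0 then P else M)" for t :: real
  have X: "X t ** matrix_inv (X t) = mat 1" "matrix_inv (X t) ** X t = mat 1" for t
    using matrix_inv_mult[OF \<open>invertible P\<close>] matrix_inv_mult[OF \<open>invertible M\<close>] by (simp_all add: X_def)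
  define E where "E t = inverse t *\<^sub>R (K t ** matrix_inv (X t) - mat 1)" for t
  show "K t = (mat 1 + t *\<^sub>R E t) ** (if t > 0 then P else M)" if "t \<noteq> 0" for t
    using that X(2) by (simp add: E_def X_def[symmetric] matrix_mul_assoc[symmetric])
  have eq: "t *\<^sub>R E t = (K t - X t) ** matrix_inv (X t)" if "t \<noteq> 0" for t
    using that X(1)[of t] by (simp add: E_def vec_eq_iff matrix_matrix_mult_row vector_matrix_mult_diff_distrib)
  have "((\<lambda>t. (K t - X t) ** matrix_inv (X t)) \<longlongrightarrow> 0) at_infinity"
  proof (rule Lim_null_comparison)
    show "eventually (\<lambda>t. norm ((K t - X t) ** matrix_inv (X t))
        \<le> norm ((K t - X t) ** matrix_inv P) + norm ((K t - X t) ** matrix_inv M)) at_infinity"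
      by (intro always_eventually allI) (simp add: X_def)
    show "((\<lambda>t. norm ((K t - X t) ** matrix_inv P) + norm ((K t - X t) ** matrix_inv M)) \<longlongrightarrow> 0) at_infinity"
      using lim unfolding X_def[symmetric]
      by (intro tendsto_add_zero tendsto_norm_zero tendsto_matrix_mult_right_zero)
  qed
  then show "((\<lambda>t. t *\<^sub>R E t) \<longlongrightarrow> 0) at_infinity"
    by (rule Lim_transform_eventually[OF _ eventually_mono[OF eventually_not_equal_at_infinity eq[symmetric]]])
qed

lemma renormalized_curve_factorization:
  fixes \<Phi> :: "real \<Rightarrow> real^('n::{finite,wellorder})^('n::{finite,wellorder})"
    and B :: "real^('n::{finite,wellorder})^('n::{finite,wellorder})"
  assumes lim: "((\<lambda>t. a_diag \<bar>t\<bar> ** \<Phi> (s + inverse t) ** (mat 1 - t *\<^sub>R B) - (if t > 0 then \<xi>p else \<xi>m))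
      \<longlongrightarrow> 0) at_infinity"
    and unimodular: "eventually (\<lambda>t. det (\<Phi> (s + inverse t)) = 1) at_infinity"
    and det_B: "\<And>t. det (mat 1 - t *\<^sub>R B) = 1"
  shows "det \<xi>p = 1 \<and> det \<xi>m = 1 \<and> (\<exists>E. ((\<lambda>t. t *\<^sub>R E t) \<longlongrightarrow> 0) at_infinity \<and>
           (\<forall>t. t \<noteq> 0 \<longrightarrow> a_diag \<bar>t\<bar> ** \<Phi> (s + inverse t)
                 = (mat 1 + t *\<^sub>R E t) ** (if t > 0 then \<xi>p else \<xi>m) ** matrix_inv (mat 1 - t *\<^sub>R B)))"
proof -
  have "eventually (\<lambda>t. det (a_diag \<bar>t\<bar> ** \<Phi> (s + inverse t) ** (mat 1 - t *\<^sub>R B)) = 1) at_infinity"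
    using unimodular eventually_not_equal_at_infinity[of 0]
    by eventually_elim (simp add: det_mul det_a_diag det_B)
  then have "det \<xi>p = 1" "det \<xi>m = 1" using det_one_sided_limits[OF lim] by blast+
  moreover from this have "invertible \<xi>p" "invertible \<xi>m" by (simp_all add: invertible_det_nz)
  then obtain E where "((\<lambda>t. t *\<^sub>R E t) \<longlongrightarrow> 0) at_infinity" and factor: "\<And>t. t \<noteq> 0 \<Longrightarrow>
      a_diag \<bar>t\<bar> ** \<Phi> (s + inverse t) ** (mat 1 - t *\<^sub>R B) = (mat 1 + t *\<^sub>R E t) ** (if t > 0 then \<xi>p else \<xi>m)"
    using two_sided_factorization[OF lim] by blast
  moreover have "invertible (mat 1 - t *\<^sub>R B)" for t using det_B by (simp add: invertible_det_nz)
  ultimately show ?thesis using matrix_mult_right_cancel[OF _ factor] by blast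
qed

theorem lemma2p1:
  fixes \<Phi> :: "real \<Rightarrow> (real^('n::{finite,wellorder}))^('n::{finite,wellorder})"
    and \<Omega> :: "real set" and s :: real
  assumes n_ge: "CARD('n) \<ge> 2"
    and open_\<Omega>: "open \<Omega>"
    and SL: "\<forall>x\<in>\<Omega>. det (\<Phi> x) = 1"
    and C1: "\<Phi> C1_differentiable_on \<Omega>"
    and s_in: "s \<in> \<Omega>"
    and diff: "\<exists>D. higher_diff_at (CARD('n)) (\<lambda>x. \<Phi> x $ first_idx) s D"
    and nondeg: "nondeg_at (\<lambda>x. \<Phi> x $ first_idx) \<Omega> s"
  shows "\<exists>B \<xi>p \<xi>m E.
           nilpotent_mat B \<and> rank B = CARD('n) - 1 \<and>
           det \<xi>p = 1 \<and> det \<xi>m = 1 \<and>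
           ((\<lambda>t. t *\<^sub>R E t) \<longlongrightarrow> 0) at_infinity \<and>
           (\<forall>t. t \<noteq> 0 \<and> s + inverse t \<in> \<Omega> \<longrightarrow>
              a_diag \<bar>t\<bar> ** \<Phi> (s + inverse t) =
                (mat 1 + t *\<^sub>R E t) ** (if t > 0 then \<xi>p else \<xi>m)
                  ** matrix_inv (mat 1 - t *\<^sub>R B))"
proof -
  define n where "n = CARD('n) - 1"
  have card: "CARD('n) = Suc n" using n_ge by (simp add: n_def)
  from diff obtain D where hd: "higher_diff_at (CARD('n)) (\<lambda>x. \<Phi> x $ first_idx) s D" by blast
  define v where "v k = inverse (fact k) *\<^sub>R D k s" for k
  have span: "span (v ` {..n}) = UNIV"
    using nondeg_at_derivatives_span[OF n_ge hd nondeg]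
      span_image_scaleR_nonzero[of "{..n}" "\<lambda>k. inverse (fact k)" "\<lambda>k. D k s"]
    by (simp add: v_def n_def setcompr_eq_image atMost_def)
  obtain B where B0: "v 0 v* B = 0" and Bs: "\<forall>k<n. v (Suc k) v* B = v k"
    using shift_matrix_exists[OF card span] by blast
  have det_B: "det (mat 1 - t *\<^sub>R B) = 1" for t
    using det_one_minus_shift_matrix[OF card span B0 Bs] .
  have "isCont \<Phi> s"
    using C1 s_in by (auto simp: C1_differentiable_on_eq intro: differentiable_imp_continuous_within)
  moreover have "little_o_at_0 (Suc n) (\<lambda>h. \<Phi> (s + h) $ first_idx - (\<Sum>k\<le>Suc n. h ^ k *\<^sub>R v k))"
    using higher_diff_at_taylor[OF hd] card by (simp add: v_def divide_inverse)
  ultimately obtain \<xi>p \<xi>m where lim: "((\<lambda>t. a_diag \<bar>t\<bar> ** \<Phi> (s + inverse t) ** (mat 1 - t *\<^sub>R B)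
      - (if t > 0 then \<xi>p else \<xi>m)) \<longlongrightarrow> 0) at_infinity"
    using renormalized_curve_limit[OF card _ B0 Bs] by blast
  have "eventually (\<lambda>t. s + inverse t \<in> \<Omega>) at_infinity"
    using topological_tendstoD[OF tendsto_add[OF tendsto_const tendsto_inverse_0] open_\<Omega>] s_in by simp
  then have "eventually (\<lambda>t. det (\<Phi> (s + inverse t)) = 1) at_infinity"
    using SL by (auto elim: eventually_mono)
  moreover have "nilpotent_mat B" "rank B = CARD('n) - 1"
    using shift_matrix_nilpotent[OF span B0 Bs] shift_matrix_rank[OF card span B0 Bs] card by simp_all
  ultimately show ?thesis
    using renormalized_curve_factorization[OF lim _ det_B] by blast
qed

end
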